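(* Let $\nu$ be a Krull valuation on $\mathbb{K}[x]$ and $Q$ a key polynomial for $\nu$. Suppose there exist an integer $e\ge1$ and a nonzero $h\in\mathbb{K}[x]$ with $\deg h<\deg Q$ and $\nu(Q^e)=\nu(h)$, and let $r=Q^e/h\in\mathbb{K}(x)$. Then $\nu_Q(r)=0$ and the residue $r\nu_Q$ of $r$ in the residue field $\mathbb{K}(x)\nu_Q$ is transcendental over $\mathbb{K}\nu$; in particular it is transcendental over any algebraic extension of $\mathbb{K}\nu$ contained in $\mathbb{K}(x)\nu_Q$.
   Context: Truncation: every $f\in\mathbb{K}[x]$ has a unique $Q$-expansion $f=\sum f_iQ^i$ with $\deg f_i<\deg Q$; $\nu_Q(f)=\min_i\nu(f_iQ^i)$. For a key polynomial $Q$, $\nu_Q$ is a valuation on $\mathbb{K}[x]$, extended to $\mathbb{K}(x)$; $\mathbb{K}\nu$ is the residue field of $\nu$ on $\mathbb{K}$. Key polynomials: for nonzero $f$, with Hasse derivatives $\partial_bf=\sum_{i\ge b}\binom{i}{b}a_ix^{i-b}$ for $f=\sum a_ix^i$, $\epsilon(f)=\max_{1\le b\le\deg f}(\nu(f)-\nu(\partial_bf))/b$ if $\deg f>0$ and $\epsilon(f)=-\infty$ if $f$ is constant; a monic $Q$ is a key polynomial for $\nu$ if $\epsilon(f)\ge\epsilon(Q)$ implies $\deg f\ge\deg Q$ for all $f$. *)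

theory Defs
  imports "HOL-Computational_Algebra.Polynomial" "HOL-Computational_Algebra.Fraction_Field"
          "HOL-Algebra.Finite_Extensions"
begin

text \<open>The value at 0 is infinity; we only ever evaluate v at nonzero polynomials
  (values of nonzero polynomials are finite, i.e. the support is trivial, as is
  needed to extend the valuation to K(x)).\<close>

definition krull_valuation :: "('a::field poly \<Rightarrow> 'g::linordered_ab_group_add) \<Rightarrow> bool" where
  "krull_valuation v \<longleftrightarrow>
     (\<forall>f g. f \<noteq> 0 \<longrightarrow> g \<noteq> 0 \<longrightarrow> v (f * g) = v f + v g) \<and>
     (\<forall>f g. f \<noteq> 0 \<longrightarrow> g \<noteq> 0 \<longrightarrow> f + g \<noteq> 0 \<longrightarrow> min (v f) (v g) \<le> v (f + g))"

definition hasse_deriv :: "nat \<Rightarrow> 'a::field poly \<Rightarrow> 'a poly" where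
  "hasse_deriv b f = (\<Sum>i\<in>{b..Polynomial.degree f}. Polynomial.monom (of_nat (i choose b) * Polynomial.coeff f i) (i - b))"

primrec nmul :: "nat \<Rightarrow> 'g::monoid_add \<Rightarrow> 'g" where
  "nmul 0 x = 0"
| "nmul (Suc n) x = x + nmul n x"

text \<open>eps_ge v f g expresses \<open>\<epsilon>(f) \<ge> \<epsilon>(g)\<close> for nonzero f, g, where
  \<open>\<epsilon>(f) = max_{1\<le>b\<le>deg f} (\<nu>(f) - \<nu>(\<partial>_b f))/b\<close> (terms with \<open>\<partial>_b f = 0\<close> are \<open>-\<infinity>\<close>)
  and \<open>\<epsilon>(f) = -\<infinity>\<close> for constant f. The quotients live in the divisible hull of
  the value group; the comparison
  \<open>(\<nu> f - \<nu> \<partial>_b f)/b \<ge> (\<nu> g - \<nu> \<partial>_c g)/c\<close> is written division-free as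
  \<open>c(\<nu> f - \<nu> \<partial>_b f) \<ge> b(\<nu> g - \<nu> \<partial>_c g)\<close>.\<close>
definition eps_ge :: "('a::field poly \<Rightarrow> 'g::linordered_ab_group_add) \<Rightarrow> 'a poly \<Rightarrow> 'a poly \<Rightarrow> bool" where
  "eps_ge v f g \<longleftrightarrow>
     Polynomial.degree g = 0 \<or>
     (Polynomial.degree f > 0 \<and>
      (\<exists>b\<in>{1..Polynomial.degree f}. hasse_deriv b f \<noteq> 0 \<and>
         (\<forall>c\<in>{1..Polynomial.degree g}. hasse_deriv c g \<noteq> 0 \<longrightarrow>
            nmul b (v g - v (hasse_deriv c g)) \<le> nmul c (v f - v (hasse_deriv b f)))))"

definition key_polynomial :: "('a::field poly \<Rightarrow> 'g::linordered_ab_group_add) \<Rightarrow> 'a poly \<Rightarrow> bool" where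
  "key_polynomial v Q \<longleftrightarrow> Polynomial.lead_coeff Q = 1 \<and>
     (\<forall>f. f \<noteq> 0 \<longrightarrow> eps_ge v f Q \<longrightarrow> Polynomial.degree Q \<le> Polynomial.degree f)"

text \<open>The i-th coefficient of the Q-expansion \<open>f = \<Sum> f_i Q^i\<close>, \<open>deg f_i < deg Q\<close>.\<close>
definition qexp :: "'a::field poly \<Rightarrow> 'a poly \<Rightarrow> nat \<Rightarrow> 'a poly" where
  "qexp Q f i = (f div Q ^ i) mod Q"

definition trunc_val :: "('a::field poly \<Rightarrow> 'g::linordered_ab_group_add) \<Rightarrow> 'a poly \<Rightarrow> 'a poly \<Rightarrow> 'g" where
  "trunc_val v Q f = Min {v (qexp Q f i * Q ^ i) | i. i \<le> Polynomial.degree f \<and> qexp Q f i \<noteq> 0}"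

definition trunc_val_frac :: "('a::field poly \<Rightarrow> 'g::linordered_ab_group_add) \<Rightarrow> 'a poly \<Rightarrow> 'a poly fract \<Rightarrow> 'g" where
  "trunc_val_frac v Q z = (THE w. \<exists>f g. f \<noteq> 0 \<and> g \<noteq> 0 \<and> z = Fract f g \<and> w = trunc_val v Q f - trunc_val v Q g)"

definition val_ring :: "('a::field poly \<Rightarrow> 'g::linordered_ab_group_add) \<Rightarrow> 'a poly \<Rightarrow> 'a poly fract ring" where
  "val_ring v Q = \<lparr>carrier = {z. z = 0 \<or> 0 \<le> trunc_val_frac v Q z},
                   monoid.mult = (*), one = 1, zero = 0, add = (+)\<rparr>"

definition max_ideal :: "('a::field poly \<Rightarrow> 'g::linordered_ab_group_add) \<Rightarrow> 'a poly \<Rightarrow> 'a poly fract set" where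
  "max_ideal v Q = {z. z = 0 \<or> 0 < trunc_val_frac v Q z}"

definition residue_field :: "('a::field poly \<Rightarrow> 'g::linordered_ab_group_add) \<Rightarrow> 'a poly \<Rightarrow> 'a poly fract set ring" where
  "residue_field v Q = val_ring v Q Quot max_ideal v Q"

definition residue :: "('a::field poly \<Rightarrow> 'g::linordered_ab_group_add) \<Rightarrow> 'a poly \<Rightarrow> 'a poly fract \<Rightarrow> 'a poly fract set" where
  "residue v Q z = max_ideal v Q +>\<^bsub>val_ring v Q\<^esub> z"

text \<open>The residue field \<open>K\<nu>\<close> of \<open>\<nu>\<close> on K, viewed inside \<open>K(x)\<nu>_Q\<close> via the natural
  embedding \<open>c\<nu> \<mapsto> c\<nu>_Q\<close> (for constants c, \<open>\<nu>_Q(c) = \<nu>(c)\<close>).\<close>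
definition base_residue_field :: "('a::field poly \<Rightarrow> 'g::linordered_ab_group_add) \<Rightarrow> 'a poly \<Rightarrow> 'a poly fract set set" where
  "base_residue_field v Q = {residue v Q (Fract [:c:] 1) | c. c = 0 \<or> 0 \<le> v [:c:]}"

end

theory Submission
  imports Defs
begin

text \<open>
  Let \<open>\<epsilon>(Q) = (\<nu>(Q) - \<nu>(\<partial>_B Q)) / B\<close>, with \<open>B\<close> attaining the maximum. Since \<open>Q\<close> is a key
  polynomial, every nonzero \<open>f\<close> of degree below \<open>deg Q\<close> has \<open>\<epsilon>(f) < \<epsilon>(Q)\<close>, and by the Leibniz
  rule for Hasse derivatives so does a product of two such polynomials. Comparing \<open>B\<close>-th Hasse
  derivatives then shows that for \<open>f g = a Q + r\<close> the remainder carries the value: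
  \<open>\<nu>(r) = \<nu>(f g) < \<nu>(a Q)\<close>. Hence the lowest terms of a product of two \<open>Q\<close>-expansions cannot
  cancel, the truncation \<open>\<nu>_Q\<close> is multiplicative, and it extends to \<open>K(x)\<close> with a residue field.

  For \<open>r = Q^e / h\<close> we get \<open>\<nu>_Q(r) = e \<nu>(Q) - \<nu>(h) = 0\<close>. Suppose \<open>\<Sum> d_k r^k\<close>, with integral
  \<open>d_k\<close> and \<open>d_m\<close> a unit, had positive value, and clear denominators. For the least \<open>i\<close> with \<open>d_i\<close> a
  unit, the coefficient of \<open>Q^(e i)\<close> in \<open>\<Sum> d_k h^(m - k) Q^(e k)\<close> is \<open>d_i (h^(m - i) mod Q)\<close>, of
  value \<open>(m - i) \<nu>(h)\<close>; so the numerator has \<open>\<nu>_Q\<close> at most \<open>m \<nu>(h) = \<nu>_Q(h^m)\<close>, a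
  contradiction. Thus the residue of \<open>r\<close> is transcendental over \<open>K\<nu>\<close>, and by the tower law also
  over every algebraic extension of \<open>K\<nu>\<close>.
\<close>

hide_const (open) UnivPoly.coeff UnivPoly.monom Polynomials.degree Polynomials.lead_coeff
  Module.module.smult

section \<open>Hasse derivatives\<close>

lemma coeff_hasse_deriv: "coeff (hasse_deriv b f) k = of_nat ((k + b) choose b) * coeff f (k + b)"
proof -
  have "coeff (hasse_deriv b f) k
      = (\<Sum>i\<in>{b..degree f}. if i = k + b then of_nat (i choose b) * coeff f i else 0)"
    unfolding hasse_deriv_def coeff_sum coeff_monom by (intro sum.cong refl) auto
  also have "\<dots> = (if k + b \<in> {b..degree f} then of_nat ((k + b) choose b) * coeff f (k + b) else 0)"
    by (rule sum.delta) simp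
  also have "\<dots> = of_nat ((k + b) choose b) * coeff f (k + b)"
    using coeff_eq_0[of f "k + b"] by auto
  finally show ?thesis .
qed

lemma hasse_deriv_0 [simp]: "hasse_deriv 0 f = f"
  by (simp add: poly_eq_iff coeff_hasse_deriv)

lemma hasse_deriv_zero [simp]: "hasse_deriv b 0 = 0"
  by (simp add: poly_eq_iff coeff_hasse_deriv)

lemma hasse_deriv_add: "hasse_deriv b (f + g) = hasse_deriv b f + hasse_deriv b g"
  by (simp add: poly_eq_iff coeff_hasse_deriv algebra_simps)

lemma hasse_deriv_eq_0: "degree f < b \<Longrightarrow> hasse_deriv b f = 0"
  by (simp add: poly_eq_iff coeff_hasse_deriv coeff_eq_0)

lemma coeff_0_hasse_deriv_degree: "coeff (hasse_deriv (degree f) f) 0 = lead_coeff f"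
  by (simp add: coeff_hasse_deriv)

lemma hasse_deriv_pCons:
  "hasse_deriv b (pCons a f) =
     (if b = 0 then [:a:] else 0) + pCons 0 (hasse_deriv b f) + (if b = 0 then 0 else hasse_deriv (b - 1) f)"
proof (rule poly_eqI)
  fix k
  show "coeff (hasse_deriv b (pCons a f)) k = coeff ((if b = 0 then [:a:] else 0)
          + pCons 0 (hasse_deriv b f) + (if b = 0 then 0 else hasse_deriv (b - 1) f)) k"
  proof (cases b)
    case (Suc c)
    then show ?thesis
      by (cases k) (simp_all add: coeff_hasse_deriv coeff_pCons algebra_simps)
  qed (simp add: coeff_pCons split: nat.split)
qed

text \<open>The Taylor shift \<open>f(x + y)\<close>, a polynomial in \<open>y\<close> over \<open>K[x]\<close>, has the Hasse derivatives
  as coefficients; its multiplicativity yields the Leibniz rule.\<close>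

definition taylor_shift :: "'a::field poly \<Rightarrow> 'a poly poly" where
  "taylor_shift f = pcompose (map_poly (\<lambda>c. [:c:]) f) [:[:0, 1:], 1:]"

lemma coeff_taylor_shift: "coeff (taylor_shift f) b = hasse_deriv b f"
proof (induction f arbitrary: b)
  case (pCons a f)
  have "taylor_shift (pCons a f) = [:[:a:]:] + [:[:0, 1:], 1:] * taylor_shift f"
    unfolding taylor_shift_def by (simp add: map_poly_pCons pcompose_pCons)
  also have "\<dots> = [:[:a:]:] + smult [:0, 1:] (taylor_shift f) + pCons 0 (taylor_shift f)"
    by (simp add: mult_pCons_left)
  finally show ?case
    by (cases b) (auto simp: hasse_deriv_pCons pCons.IH coeff_pCons)
qed (simp add: taylor_shift_def)

lemma map_poly_const_mult:
  "map_poly (\<lambda>c. [:c:]) (f * g) = map_poly (\<lambda>c. [:c::'a::field:]) f * map_poly (\<lambda>c. [:c:]) g"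
proof (induction f)
  case (pCons a f)
  have "map_poly (\<lambda>c. [:c::'a:]) (p + q) = map_poly (\<lambda>c. [:c:]) p + map_poly (\<lambda>c. [:c:]) q" for p q
    by (simp add: poly_eq_iff coeff_map_poly)
  moreover have "map_poly (\<lambda>c. [:c:]) (smult a g) = smult [:a:] (map_poly (\<lambda>c. [:c:]) g)"
    by (simp add: poly_eq_iff coeff_map_poly mult.commute)
  ultimately show ?case
    by (simp add: mult_pCons_left map_poly_pCons pCons.IH)
qed simp

lemma taylor_shift_mult: "taylor_shift (f * g) = taylor_shift f * taylor_shift g"
  unfolding taylor_shift_def map_poly_const_mult pcompose_mult ..

lemma hasse_deriv_mult: "hasse_deriv b (f * g) = (\<Sum>i\<le>b. hasse_deriv i f * hasse_deriv (b - i) g)"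
  using arg_cong[OF taylor_shift_mult[of f g], of "\<lambda>p. coeff p b"]
  by (simp add: coeff_taylor_shift coeff_mult)

lemma hasse_deriv_mult_split_first:
  "hasse_deriv (Suc b) (f * g)
     = f * hasse_deriv (Suc b) g + (\<Sum>i\<le>b. hasse_deriv (Suc i) f * hasse_deriv (b - i) g)"
  unfolding hasse_deriv_mult sum.atMost_Suc_shift by simp

lemma nmul_add_left: "nmul (a + b) x = nmul a x + nmul b (x::'g::monoid_add)"
  by (induction a) (simp_all add: add.assoc)

lemma nmul_add_right: "nmul n (x + y) = nmul n x + nmul n (y::'g::comm_monoid_add)"
  by (induction n) (simp_all add: algebra_simps)

lemma nmul_zero [simp]: "nmul n (0::'g::monoid_add) = 0"
  by (induction n) simp_all

lemma nmul_diff: "nmul n (x - y) = nmul n x - nmul n (y::'g::ab_group_add)"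
  by (induction n) (simp_all add: algebra_simps)

lemma nmul_commute: "nmul a (nmul b x) = nmul b (nmul a (x::'g::comm_monoid_add))"
proof -
  have "nmul (a * b) x = nmul a (nmul b x)" for a b
    by (induction a) (simp_all add: nmul_add_left nmul_add_right)
  then show ?thesis by (metis mult.commute)
qed

lemma nmul_mono: "x \<le> y \<Longrightarrow> nmul n x \<le> nmul n (y::'g::ordered_comm_monoid_add)"
  by (induction n) (simp_all add: add_mono)

lemma nmul_strict_mono: "x < y \<Longrightarrow> n \<ge> 1 \<Longrightarrow> nmul n x < nmul n (y::'g::ordered_cancel_comm_monoid_add)"
proof (induction n)
  case (Suc n)
  then show ?case using nmul_mono[of x y n] by (simp add: add_less_le_mono)
qed simp

lemma nmul_le_cancel: "nmul n x \<le> nmul n y \<Longrightarrow> n \<ge> 1 \<Longrightarrow> x \<le> (y::'g::{linorder, ordered_cancel_comm_monoid_add})"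
  using nmul_strict_mono[of y x n] by (meson not_le)

lemma nmul_less_cancel: "nmul n x < nmul n y \<Longrightarrow> x < (y::'g::{linorder, ordered_comm_monoid_add})"
  using nmul_mono[of y x n] by (meson not_le)

lemma finite_total_rel_has_max:
  assumes "finite S" "S \<noteq> {}"
    and total: "\<forall>x\<in>S. \<forall>y\<in>S. R x y \<or> R y x"
    and trans: "\<forall>x\<in>S. \<forall>y\<in>S. \<forall>z\<in>S. R x y \<longrightarrow> R y z \<longrightarrow> R x z"
  shows "\<exists>m\<in>S. \<forall>c\<in>S. R c m"
  using assms(1,2) total trans
proof (induction S rule: finite_ne_induct)
  case (singleton x)
  then show ?case by blast
next
  case (insert x F)
  have "\<forall>x\<in>F. \<forall>y\<in>F. R x y \<or> R y x" "\<forall>x\<in>F. \<forall>y\<in>F. \<forall>z\<in>F. R x y \<longrightarrow> R y z \<longrightarrow> R x z"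
    using insert.prems by blast+
  then obtain m where m: "m \<in> F" "\<forall>c\<in>F. R c m"
    using insert.IH by blast
  show ?case
  proof (cases "R x m")
    case True
    then show ?thesis using m by blast
  next
    case False
    then have "R m x"
      using insert.prems(1) m(1) by blast
    then have "\<forall>c\<in>insert x F. R c x"
      using insert.prems m by blast
    then show ?thesis by blast
  qed
qed

section \<open>Krull valuations\<close>

locale krull_val =
  fixes v :: "'a::field poly \<Rightarrow> 'g::linordered_ab_group_add"
  assumes krull_valuation: "krull_valuation v"
begin

lemma val_mult: "f \<noteq> 0 \<Longrightarrow> g \<noteq> 0 \<Longrightarrow> v (f * g) = v f + v g"
  using krull_valuation unfolding krull_valuation_def by blast

lemma val_add: "f \<noteq> 0 \<Longrightarrow> g \<noteq> 0 \<Longrightarrow> f + g \<noteq> 0 \<Longrightarrow> min (v f) (v g) \<le> v (f + g)"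
  using krull_valuation unfolding krull_valuation_def by blast

lemma val_one [simp]: "v 1 = 0"
  using val_mult[of 1 1] by simp

lemma val_uminus [simp]: "v (- f) = v f"
proof -
  have "v (-1) + v (-1) = 0"
    using val_mult[of "-1" "-1"] by simp
  then have "v (-1) = 0"
    by (metis add_neg_neg add_pos_pos less_irrefl linorder_neqE)
  then show ?thesis
    using val_mult[of "-1" f] by (cases "f = 0") simp_all
qed

lemma val_power: "f \<noteq> 0 \<Longrightarrow> v (f ^ k) = nmul k (v f)"
  by (induction k) (simp_all add: val_mult)

definition val_ge :: "'g \<Rightarrow> 'a poly \<Rightarrow> bool" where
  "val_ge \<gamma> y \<longleftrightarrow> y = 0 \<or> \<gamma> \<le> v y"

definition val_gt :: "'g \<Rightarrow> 'a poly \<Rightarrow> bool" where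
  "val_gt \<gamma> y \<longleftrightarrow> y = 0 \<or> \<gamma> < v y"

lemma val_ge_0 [simp]: "val_ge \<gamma> 0" and val_gt_0 [simp]: "val_gt \<gamma> 0"
  by (simp_all add: val_ge_def val_gt_def)

lemma val_ge_add: "val_ge \<gamma> x \<Longrightarrow> val_ge \<gamma> y \<Longrightarrow> val_ge \<gamma> (x + y)"
  unfolding val_ge_def using val_add[of x y] by (metis add.right_neutral add_0 min.bounded_iff order_trans)

lemma val_gt_add: "val_gt \<gamma> x \<Longrightarrow> val_gt \<gamma> y \<Longrightarrow> val_gt \<gamma> (x + y)"
  unfolding val_gt_def using val_add[of x y] by (metis add.right_neutral add_0 min_less_iff_conj order_less_le_trans)

lemma val_gt_diff: "val_gt \<gamma> x \<Longrightarrow> val_gt \<gamma> y \<Longrightarrow> val_gt \<gamma> (x - y)"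
  using val_gt_add[of \<gamma> x "- y"] by (simp add: val_gt_def)

lemma val_gt_sum: "(\<And>i. i \<in> A \<Longrightarrow> val_gt \<gamma> (F i)) \<Longrightarrow> val_gt \<gamma> (sum F A)"
  by (induction A rule: infinite_finite_induct) (auto intro: val_gt_add)

lemma nmul_val_gt_sum:
  assumes "\<And>i. i \<in> A \<Longrightarrow> F i = 0 \<or> \<gamma> < nmul k (v (F i))"
  shows "sum F A = 0 \<or> \<gamma> < nmul k (v (sum F A))"
  using assms
proof (induction A rule: infinite_finite_induct)
  case (insert a A)
  let ?x = "F a" and ?y = "sum F A"
  consider "?x = 0" | "?y = 0" | "?x + ?y = 0" | "?x \<noteq> 0" "?y \<noteq> 0" "?x + ?y \<noteq> 0"
    by blast
  then show ?case
  proof cases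
    case 4
    have "\<gamma> < nmul k (v ?x)"
      using insert.prems[of a] 4 by blast
    moreover have "\<gamma> < nmul k (v ?y)"
      using insert.IH insert.prems 4 by blast
    ultimately have "\<gamma> < nmul k (min (v ?x) (v ?y))"
      by (simp add: min_def)
    also have "\<dots> \<le> nmul k (v (?x + ?y))"
      using val_add[OF 4] by (rule nmul_mono)
    finally show ?thesis
      using insert by simp
  qed (use insert in \<open>auto simp: add_eq_0_iff\<close>)
qed simp_all

lemma val_gt_imp_ge: "val_gt \<gamma> x \<Longrightarrow> val_ge \<gamma> x"
  unfolding val_gt_def val_ge_def by auto

lemma val_gt_mono: "val_gt \<gamma> x \<Longrightarrow> \<delta> \<le> \<gamma> \<Longrightarrow> val_gt \<delta> x"
  unfolding val_gt_def by (meson order_le_less_trans)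

lemma val_add_dominant:
  assumes "x \<noteq> 0" "val_gt (v x) y"
  shows "x + y \<noteq> 0" "v (x + y) = v x"
proof -
  show ne: "x + y \<noteq> 0"
    using assms by (auto simp: val_gt_def add_eq_0_iff)
  show "v (x + y) = v x"
  proof (cases "y = 0")
    case False
    then have "v x < v y"
      using assms by (simp add: val_gt_def)
    moreover have "min (v x) (v y) \<le> v (x + y)"
      using val_add assms(1) False ne by blast
    moreover have "min (v (x + y)) (v (- y)) \<le> v x"
      using val_add[of "x + y" "- y"] ne False assms(1) by simp
    ultimately show ?thesis
      by (auto simp: min_def split: if_splits)
  qed simp
qed

lemma val_diff_dominant:
  assumes "x \<noteq> 0" "val_gt (v x) y"
  shows "y - x \<noteq> 0" "v (y - x) = v x"
  using val_add_dominant[of "- x" y] assms by (simp_all add: val_gt_def)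

end



section \<open>The key polynomial inequality\<close>

lemma degree_div_less_if_degree_less:
  fixes p q :: "'a::field poly"
  assumes "degree p < 2 * degree q - 1"
  shows "degree (p div q) < degree q"
proof (cases "p div q = 0")
  case False
  then have "q \<noteq> 0" by auto
  have "degree (p div q * q) = degree (p div q) + degree q"
    using False \<open>q \<noteq> 0\<close> by (simp add: degree_mult_eq)
  moreover have "degree (p div q * q) \<le> max (degree p) (degree (p mod q))"
    using degree_diff_le_max[of p "p mod q"] by (simp add: minus_mod_eq_div_mult)
  moreover have "degree (p mod q) < degree q"
    using degree_mod_less[OF \<open>q \<noteq> 0\<close>, of p] assms by auto
  ultimately show ?thesis
    using assms by linarith
qed (use assms in auto)

locale key_poly = krull_val v for v :: "'a::field poly \<Rightarrow> 'g::linordered_ab_group_add" +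
  fixes Q :: "'a poly"
  assumes key: "key_polynomial v Q"
    and degree_Q: "degree Q \<ge> 1"
begin

lemma Q_monic: "lead_coeff Q = 1"
  using key unfolding key_polynomial_def by auto

lemma Q_nonzero [simp]: "Q \<noteq> 0"
  using degree_Q by auto

text \<open>\<open>\<epsilon>(Q)\<close> is the maximum of \<open>key_drop c / c\<close> over \<open>key_indices\<close>; the index \<open>B\<close> below
  attains it, so that \<open>\<epsilon>(Q) = E / B\<close>.\<close>

definition key_drop :: "nat \<Rightarrow> 'g" where
  "key_drop c = v Q - v (hasse_deriv c Q)"

definition key_indices :: "nat set" where
  "key_indices = {c \<in> {1..degree Q}. hasse_deriv c Q \<noteq> 0}"

lemma degree_Q_in_key_indices: "degree Q \<in> key_indices"
proof -
  have "coeff (hasse_deriv (degree Q) Q) 0 = 1"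
    using coeff_0_hasse_deriv_degree[of Q] Q_monic by simp
  then show ?thesis
    using degree_Q unfolding key_indices_def by auto
qed

lemma eps_index_exists:
  "\<exists>m\<in>key_indices. \<forall>c\<in>key_indices. nmul m (key_drop c) \<le> nmul c (key_drop m)"
proof (rule finite_total_rel_has_max)
  show "finite key_indices" "key_indices \<noteq> {}"
    using degree_Q_in_key_indices unfolding key_indices_def by auto
  show "\<forall>x\<in>key_indices. \<forall>y\<in>key_indices. nmul y (key_drop x) \<le> nmul x (key_drop y) \<or>
      nmul x (key_drop y) \<le> nmul y (key_drop x)"
    by auto
  show "\<forall>x\<in>key_indices. \<forall>y\<in>key_indices. \<forall>z\<in>key_indices.
      nmul y (key_drop x) \<le> nmul x (key_drop y) \<longrightarrow> nmul z (key_drop y) \<le> nmul y (key_drop z) \<longrightarrow>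
      nmul z (key_drop x) \<le> nmul x (key_drop z)"
  proof (intro ballI impI)
    fix x y z
    assume "y \<in> key_indices"
      and xy: "nmul y (key_drop x) \<le> nmul x (key_drop y)"
      and yz: "nmul z (key_drop y) \<le> nmul y (key_drop z)"
    then have "y \<ge> 1"
      unfolding key_indices_def by auto
    have "nmul y (nmul z (key_drop x)) = nmul z (nmul y (key_drop x))"
      by (rule nmul_commute)
    also have "\<dots> \<le> nmul z (nmul x (key_drop y))"
      using xy by (rule nmul_mono)
    also have "\<dots> = nmul x (nmul z (key_drop y))"
      by (rule nmul_commute)
    also have "\<dots> \<le> nmul x (nmul y (key_drop z))"
      using yz by (rule nmul_mono)
    also have "\<dots> = nmul y (nmul x (key_drop z))"
      by (rule nmul_commute)
    finally show "nmul z (key_drop x) \<le> nmul x (key_drop z)"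
      using \<open>y \<ge> 1\<close> by (rule nmul_le_cancel)
  qed
qed

definition B :: nat where
  "B = (SOME m. m \<in> key_indices \<and> (\<forall>c\<in>key_indices. nmul m (key_drop c) \<le> nmul c (key_drop m)))"

definition E :: 'g where
  "E = key_drop B"

lemma B_in_key_indices: "B \<in> key_indices"
  and B_max: "c \<in> key_indices \<Longrightarrow> nmul B (key_drop c) \<le> nmul c E"
  using someI_ex[OF eps_index_exists[unfolded Bex_def]] unfolding B_def[symmetric] E_def by auto

lemma B_pos: "B \<ge> 1" and hasse_deriv_B_Q: "hasse_deriv B Q \<noteq> 0"
  using B_in_key_indices unfolding key_indices_def by auto

lemma key_drop_le: "hasse_deriv c Q \<noteq> 0 \<Longrightarrow> nmul B (v Q - v (hasse_deriv c Q)) \<le> nmul c E"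
proof (cases "c = 0")
  case False
  assume "hasse_deriv c Q \<noteq> 0"
  moreover have "c \<le> degree Q"
    using calculation hasse_deriv_eq_0 not_le by blast
  ultimately show ?thesis
    using B_max[of c] False unfolding key_indices_def key_drop_def by auto
qed simp

text \<open>\<open>eps_less f\<close> encodes \<open>\<epsilon>(f) < \<epsilon>(Q)\<close>.\<close>

definition eps_less :: "'a poly \<Rightarrow> bool" where
  "eps_less f \<longleftrightarrow> (\<forall>b\<ge>1. hasse_deriv b f \<noteq> 0 \<longrightarrow> nmul B (v f - v (hasse_deriv b f)) < nmul b E)"

lemma eps_lessD:
  "eps_less f \<Longrightarrow> b \<ge> 1 \<Longrightarrow> hasse_deriv b f \<noteq> 0 \<Longrightarrow> nmul B (v f - v (hasse_deriv b f)) < nmul b E"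
  unfolding eps_less_def by blast

lemma eps_less_if_degree_less:
  assumes "f \<noteq> 0" "degree f < degree Q"
  shows "eps_less f"
  unfolding eps_less_def
proof (intro allI impI)
  fix b :: nat
  assume b: "b \<ge> 1" "hasse_deriv b f \<noteq> 0"
  have "\<not> eps_ge v f Q"
    using key assms unfolding key_polynomial_def by (meson not_le)
  moreover have "b \<le> degree f"
    using b hasse_deriv_eq_0 not_le by blast
  ultimately obtain c where "c \<in> {1..degree Q}" "hasse_deriv c Q \<noteq> 0"
    "\<not> nmul b (v Q - v (hasse_deriv c Q)) \<le> nmul c (v f - v (hasse_deriv b f))"
    using b degree_Q unfolding eps_ge_def by auto
  then have c: "c \<in> key_indices" "nmul c (v f - v (hasse_deriv b f)) < nmul b (key_drop c)"
    unfolding key_indices_def key_drop_def by auto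
  have "nmul c (nmul B (v f - v (hasse_deriv b f))) = nmul B (nmul c (v f - v (hasse_deriv b f)))"
    by (rule nmul_commute)
  also have "\<dots> < nmul B (nmul b (key_drop c))"
    using c(2) B_pos by (rule nmul_strict_mono)
  also have "\<dots> = nmul b (nmul B (key_drop c))"
    by (rule nmul_commute)
  also have "\<dots> \<le> nmul b (nmul c E)"
    using B_max[OF c(1)] by (rule nmul_mono)
  also have "\<dots> = nmul c (nmul b E)"
    by (rule nmul_commute)
  finally show "nmul B (v f - v (hasse_deriv b f)) < nmul b E"
    by (rule nmul_less_cancel)
qed

lemma eps_less_le:
  "eps_less f \<Longrightarrow> hasse_deriv i f \<noteq> 0 \<Longrightarrow> nmul B (v f - v (hasse_deriv i f)) \<le> nmul i E"
  unfolding eps_less_def by (cases "i = 0") (auto intro: less_imp_le)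

lemma eps_less_hasse_deriv_B:
  assumes "eps_less f" "hasse_deriv B f \<noteq> 0"
  shows "v f < v (hasse_deriv B f) + E"
proof -
  have "nmul B (v f - v (hasse_deriv B f)) < nmul B E"
    using assms B_pos unfolding eps_less_def by auto
  then show ?thesis
    using nmul_less_cancel by (fastforce simp: algebra_simps)
qed

text \<open>The Leibniz rule makes \<open>\<epsilon>(f g) \<le> max (\<epsilon> f) (\<epsilon> g)\<close>.\<close>

lemma eps_less_mult:
  assumes f: "f \<noteq> 0" "eps_less f" and g: "g \<noteq> 0" "eps_less g"
  shows "eps_less (f * g)"
  unfolding eps_less_def
proof (intro allI impI)
  fix b :: nat
  assume b: "b \<ge> 1" "hasse_deriv b (f * g) \<noteq> 0"
  let ?\<gamma> = "nmul B (v f + v g) - nmul b E"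
  have "hasse_deriv i f * hasse_deriv (b - i) g = 0 \<or>
        ?\<gamma> < nmul B (v (hasse_deriv i f * hasse_deriv (b - i) g))" if "i \<le> b" for i
  proof (cases "hasse_deriv i f = 0 \<or> hasse_deriv (b - i) g = 0")
    case False
    then have nz: "hasse_deriv i f \<noteq> 0" "hasse_deriv (b - i) g \<noteq> 0"
      by auto
    have "nmul B (v f - v (hasse_deriv i f)) + nmul B (v g - v (hasse_deriv (b - i) g))
        < nmul i E + nmul (b - i) E"
    proof (cases "i = 0")
      case True
      then show ?thesis
        using g(2) nz b unfolding eps_less_def by auto
    next
      case False
      then show ?thesis
        using f(2) nz eps_less_le[OF g(2) nz(2)] unfolding eps_less_def
        by (auto intro: add_less_le_mono)
    qed
    also have "\<dots> = nmul b E"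
      using that nmul_add_left[of i "b - i" E] by simp
    finally have "nmul B (v f + v g) - nmul B (v (hasse_deriv i f) + v (hasse_deriv (b - i) g)) < nmul b E"
      by (simp add: nmul_diff nmul_add_right algebra_simps)
    then show ?thesis
      using val_mult[OF nz] by (simp add: algebra_simps)
  qed simp
  then have "?\<gamma> < nmul B (v (hasse_deriv b (f * g)))"
    using nmul_val_gt_sum[of "{..b}" "\<lambda>i. hasse_deriv i f * hasse_deriv (b - i) g"] b(2)
    unfolding hasse_deriv_mult by auto
  have "nmul B (v (f * g) - v (hasse_deriv b (f * g)))
      = nmul B (v f + v g) - nmul B (v (hasse_deriv b (f * g)))"
    using val_mult[OF f(1) g(1)] by (simp add: nmul_diff)
  also have "\<dots> < nmul b E"
    using \<open>?\<gamma> < _\<close> by (simp add: algebra_simps)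
  finally show "nmul B (v (f * g) - v (hasse_deriv b (f * g))) < nmul b E" .
qed

text \<open>In \<open>\<partial>_B (a Q) = a \<partial>_B Q + \<Sum>_{i \<ge> 1} \<partial>_i a \<partial>_{B - i} Q\<close> the terms with \<open>i \<ge> 1\<close> are
  negligible when \<open>\<epsilon>(a) < \<epsilon>(Q)\<close>.\<close>

lemma hasse_deriv_B_mult_Q:
  assumes "a \<noteq> 0" "eps_less a"
  shows "val_gt (v (a * Q) - E) (hasse_deriv B (a * Q) - a * hasse_deriv B Q)"
proof -
  obtain B' where B': "B = Suc B'"
    using B_pos by (cases B) auto
  have "hasse_deriv B (a * Q) - a * hasse_deriv B Q
      = (\<Sum>i\<le>B'. hasse_deriv (Suc i) a * hasse_deriv (B - Suc i) Q)"
    using hasse_deriv_mult_split_first[of B' a Q] B' by simp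
  also have "val_gt (v (a * Q) - E) \<dots>"
  proof (rule val_gt_sum)
    fix i
    assume "i \<in> {..B'}"
    then have i: "Suc i \<le> B"
      using B' by auto
    show "val_gt (v (a * Q) - E) (hasse_deriv (Suc i) a * hasse_deriv (B - Suc i) Q)"
    proof (cases "hasse_deriv (Suc i) a = 0 \<or> hasse_deriv (B - Suc i) Q = 0")
      case False
      then have nz: "hasse_deriv (Suc i) a \<noteq> 0" "hasse_deriv (B - Suc i) Q \<noteq> 0"
        by auto
      have "nmul B (v a - v (hasse_deriv (Suc i) a)) < nmul (Suc i) E"
        using eps_lessD[OF assms(2) _ nz(1)] by simp
      then have "nmul B (v a - v (hasse_deriv (Suc i) a)) + nmul B (v Q - v (hasse_deriv (B - Suc i) Q))
          < nmul (Suc i) E + nmul (B - Suc i) E"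
        using key_drop_le[OF nz(2)] by (rule add_less_le_mono)
      also have "\<dots> = nmul B E"
        using i nmul_add_left[of "Suc i" "B - Suc i" E] by simp
      finally have "nmul B ((v a + v Q) - (v (hasse_deriv (Suc i) a) + v (hasse_deriv (B - Suc i) Q)))
          < nmul B E"
        by (simp add: nmul_diff nmul_add_right algebra_simps)
      then have "(v a + v Q) - (v (hasse_deriv (Suc i) a) + v (hasse_deriv (B - Suc i) Q)) < E"
        by (rule nmul_less_cancel)
      then show ?thesis
        unfolding val_gt_def using val_mult[OF nz] val_mult[OF assms(1) Q_nonzero]
        by (simp add: algebra_simps)
    qed auto
  qed
  finally show ?thesis .
qed

text \<open>If \<open>\<nu>(a Q) \<le> \<nu>(p)\<close> for \<open>p = a Q + r\<close>, then \<open>\<partial>_B r\<close> would be dominated by \<open>a \<partial>_B Q\<close>,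
  forcing \<open>\<nu>(r) < \<nu>(a Q) \<le> \<nu>(r)\<close>.\<close>

lemma val_less_div_mult:
  assumes p: "p \<noteq> 0" "eps_less p" "degree p < 2 * degree Q - 1"
    and quot: "p div Q \<noteq> 0"
  shows "v p < v (p div Q * Q)"
proof (rule ccontr)
  define a r where "a = p div Q" and "r = p mod Q"
  define \<mu> where "\<mu> = v (a * Q)"
  define Y where "Y = hasse_deriv B p - (hasse_deriv B (a * Q) - a * hasse_deriv B Q)"
  assume "\<not> v p < v (p div Q * Q)"
  then have \<mu>_le: "\<mu> \<le> v p"
    unfolding \<mu>_def a_def by simp
  have a: "a \<noteq> 0" "eps_less a"
    using quot degree_div_less_if_degree_less[OF p(3)] eps_less_if_degree_less unfolding a_def by auto
  have "val_gt (\<mu> - E) (hasse_deriv B p)"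
  proof (cases "hasse_deriv B p = 0")
    case False
    then have "\<mu> < v (hasse_deriv B p) + E"
      using eps_less_hasse_deriv_B[OF p(2)] \<mu>_le by (meson order_le_less_trans)
    then show ?thesis
      unfolding val_gt_def by (simp add: algebra_simps)
  qed simp
  then have "val_gt (\<mu> - E) Y"
    using hasse_deriv_B_mult_Q[OF a] unfolding Y_def \<mu>_def by (rule val_gt_diff)
  moreover have "v (a * hasse_deriv B Q) = \<mu> - E"
    using val_mult a(1) hasse_deriv_B_Q unfolding \<mu>_def E_def key_drop_def by (simp add: algebra_simps)
  ultimately have "val_gt (v (a * hasse_deriv B Q)) Y"
    by simp
  moreover have "hasse_deriv B r = Y - a * hasse_deriv B Q"
    using arg_cong[of p "a * Q + r" "hasse_deriv B"] unfolding Y_def a_def r_def hasse_deriv_add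
    by (simp add: algebra_simps)
  ultimately have r: "hasse_deriv B r \<noteq> 0" "v (hasse_deriv B r) = \<mu> - E"
    using val_diff_dominant[of "a * hasse_deriv B Q" Y] a(1) hasse_deriv_B_Q
      \<open>v (a * hasse_deriv B Q) = \<mu> - E\<close> by auto
  then have "r \<noteq> 0"
    by auto
  then have "v r < \<mu>"
    using eps_less_hasse_deriv_B[OF _ r(1)] eps_less_if_degree_less degree_mod_less[of Q p] r(2)
    unfolding r_def by force
  moreover have "r = p + - (a * Q)"
    unfolding r_def a_def by (simp add: mod_div_mult_eq[symmetric] algebra_simps)
  then have "min (v p) (v (a * Q)) \<le> v r"
    using val_add[of p "- (a * Q)"] p(1) a(1) \<open>r \<noteq> 0\<close> by simp
  ultimately show False
    using \<mu>_le unfolding \<mu>_def by (simp add: min_def split: if_splits)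
qed

lemma val_mod_mult:
  assumes f: "f \<noteq> 0" "degree f < degree Q" and g: "g \<noteq> 0" "degree g < degree Q"
  shows "(f * g) mod Q \<noteq> 0" "v ((f * g) mod Q) = v (f * g)"
proof -
  have fg: "f * g \<noteq> 0" "degree (f * g) < 2 * degree Q - 1"
    using f g degree_mult_le[of f g] by auto
  have eq: "(f * g) mod Q = f * g + - ((f * g) div Q * Q)"
    by (simp add: mod_div_mult_eq[symmetric] algebra_simps)
  have gt: "val_gt (v (f * g)) (- ((f * g) div Q * Q))"
    using val_less_div_mult[OF fg(1) eps_less_mult[OF f(1) _ g(1)] fg(2)]
      eps_less_if_degree_less f g by (auto simp: val_gt_def)
  show "(f * g) mod Q \<noteq> 0"
    unfolding eq by (rule val_add_dominant(1)[OF fg(1) gt])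
  show "v ((f * g) mod Q) = v (f * g)"
    unfolding eq by (rule val_add_dominant(2)[OF fg(1) gt])
qed

end

section \<open>Q-expansions and the truncation \<open>\<nu>_Q\<close>\<close>

context key_poly
begin

lemma qexp_add: "qexp Q (f + g) i = qexp Q f i + qexp Q g i"
  unfolding qexp_def by (simp add: poly_div_add_left poly_mod_add_left)

lemma qexp_uminus: "qexp Q (- f) i = - qexp Q f i"
  unfolding qexp_def by (simp add: poly_div_minus_left poly_mod_minus_left)

lemma qexp_0 [simp]: "qexp Q 0 i = 0"
  unfolding qexp_def by simp

lemma qexp_sum: "qexp Q (sum F A) i = (\<Sum>a\<in>A. qexp Q (F a) i)"
  by (induction A rule: infinite_finite_induct) (simp_all add: qexp_add)

lemma qexp_mult_Q_power: "qexp Q (f * Q ^ j) i = (if i < j then 0 else qexp Q f (i - j))"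
proof (cases "i < j")
  case True
  then obtain d where "j = Suc (i + d)"
    using less_iff_Suc_add by auto
  then have eq: "f * Q ^ j = (Q * (f * Q ^ d)) * Q ^ i"
    by (simp add: power_add mult_ac)
  have "(f * Q ^ j) div Q ^ i = Q * (f * Q ^ d)"
    unfolding eq by simp
  then show ?thesis
    using True unfolding qexp_def by simp
next
  case False
  then have "Q ^ i = Q ^ (i - j) * Q ^ j"
    by (simp add: power_add[symmetric])
  then have "(f * Q ^ j) div Q ^ i = f div Q ^ (i - j)"
    by (simp add: div_mult_mult2)
  then show ?thesis
    using False unfolding qexp_def by simp
qed

lemma qexp_if_degree_less:
  assumes "degree f < degree Q"
  shows "qexp Q f i = (if i = 0 then f else 0)"
proof (cases "i = 0")
  case False
  then have "degree f < degree (Q ^ i)"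
    using assms by (simp add: degree_power_eq less_le_trans)
  then show ?thesis
    using False unfolding qexp_def by (simp add: div_poly_less)
qed (use assms in \<open>simp add: qexp_def mod_poly_less\<close>)

lemma degree_Q_power_ge: "i \<le> degree (Q ^ i)"
  using degree_Q by (simp add: degree_power_eq)

lemma qexp_eq_0_if_degree_less: "degree f < i \<Longrightarrow> qexp Q f i = 0"
  unfolding qexp_def using degree_Q_power_ge[of i] by (simp add: div_poly_less)

lemma degree_qexp_less: "qexp Q f i = 0 \<or> degree (qexp Q f i) < degree Q"
  unfolding qexp_def using degree_mod_less[of Q] by auto

abbreviation qterm :: "'a poly \<Rightarrow> nat \<Rightarrow> 'a poly" where
  "qterm f i \<equiv> qexp Q f i * Q ^ i"

lemma Q_expansion: "f = (\<Sum>i\<le>degree f. qterm f i)"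
proof -
  have partial: "f = (\<Sum>i<N. qterm f i) + (f div Q ^ N) * Q ^ N" for N
  proof (induction N)
    case (Suc N)
    have "f div Q ^ Suc N = f div Q ^ N div Q"
      by (simp only: power_Suc2 poly_div_mult_right)
    then have "f div Q ^ N = qexp Q f N + (f div Q ^ Suc N) * Q"
      unfolding qexp_def by simp
    with Suc.IH show ?case
      by (simp add: algebra_simps power_Suc2)
  qed simp
  have "f div Q ^ Suc (degree f) = 0"
    using degree_Q_power_ge[of "Suc (degree f)"] by (intro div_poly_less) simp
  then show ?thesis
    using partial[of "Suc (degree f)"] by (simp add: lessThan_Suc_atMost)
qed

lemma qexp_nonzero_exists: "f \<noteq> 0 \<Longrightarrow> \<exists>i\<le>degree f. qexp Q f i \<noteq> 0"
  using Q_expansion[of f] by (metis (no_types, lifting) atMost_iff mult_eq_0_iff sum.neutral)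

lemma trunc_val_le:
  assumes "qexp Q f i \<noteq> 0"
  shows "trunc_val v Q f \<le> v (qterm f i)"
proof -
  have "i \<le> degree f"
    using assms qexp_eq_0_if_degree_less not_less by blast
  then show ?thesis
    unfolding trunc_val_def using assms by (intro Min_le) (auto simp: finite_image_set)
qed

lemma trunc_val_attained: "f \<noteq> 0 \<Longrightarrow> \<exists>i. qexp Q f i \<noteq> 0 \<and> trunc_val v Q f = v (qterm f i)"
proof -
  assume "f \<noteq> 0"
  then have "trunc_val v Q f \<in> {v (qterm f i) | i. i \<le> degree f \<and> qexp Q f i \<noteq> 0}"
    unfolding trunc_val_def using qexp_nonzero_exists by (intro Min_in) auto
  then show ?thesis by auto
qed

definition trunc_ge :: "'g \<Rightarrow> 'a poly \<Rightarrow> bool" where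
  "trunc_ge \<gamma> f \<longleftrightarrow> (\<forall>i. val_ge \<gamma> (qterm f i))"

lemma trunc_ge_trunc_val: "trunc_ge (trunc_val v Q f) f"
  unfolding trunc_ge_def val_ge_def using trunc_val_le by auto

lemma trunc_val_geI: "f \<noteq> 0 \<Longrightarrow> trunc_ge \<gamma> f \<Longrightarrow> \<gamma> \<le> trunc_val v Q f"
  using trunc_val_attained[of f] unfolding trunc_ge_def val_ge_def by force

lemma trunc_ge_0 [simp]: "trunc_ge \<gamma> 0"
  by (simp add: trunc_ge_def)

lemma trunc_ge_add: "trunc_ge \<gamma> f \<Longrightarrow> trunc_ge \<gamma> g \<Longrightarrow> trunc_ge \<gamma> (f + g)"
  unfolding trunc_ge_def qexp_add by (simp add: distrib_right val_ge_add)

lemma trunc_ge_sum: "(\<And>a. a \<in> A \<Longrightarrow> trunc_ge \<gamma> (F a)) \<Longrightarrow> trunc_ge \<gamma> (sum F A)"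
  by (induction A rule: infinite_finite_induct) (simp_all add: trunc_ge_add)

lemma trunc_ge_mono: "trunc_ge \<gamma> f \<Longrightarrow> \<delta> \<le> \<gamma> \<Longrightarrow> trunc_ge \<delta> f"
  unfolding trunc_ge_def val_ge_def by (meson order_trans)

lemma trunc_val_add:
  "f \<noteq> 0 \<Longrightarrow> g \<noteq> 0 \<Longrightarrow> f + g \<noteq> 0 \<Longrightarrow> min (trunc_val v Q f) (trunc_val v Q g) \<le> trunc_val v Q (f + g)"
  by (intro trunc_val_geI trunc_ge_add) (auto intro: trunc_ge_mono[OF trunc_ge_trunc_val])

lemma trunc_val_uminus: "trunc_val v Q (- f) = trunc_val v Q f"
  unfolding trunc_val_def qexp_uminus by simp

lemma val_mult_Q_power: "x \<noteq> 0 \<Longrightarrow> v (x * Q ^ j) = v x + v (Q ^ j)"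
  by (simp add: val_mult)

lemma trunc_val_eq_val: "f \<noteq> 0 \<Longrightarrow> degree f < degree Q \<Longrightarrow> trunc_val v Q f = v f"
  using trunc_val_le[of f 0] trunc_val_geI[of f "v f"]
  by (simp add: qexp_if_degree_less trunc_ge_def val_ge_def)

lemma trunc_val_mult_Q_power:
  assumes "f \<noteq> 0"
  shows "trunc_val v Q (f * Q ^ j) = trunc_val v Q f + v (Q ^ j)"
proof (rule antisym)
  obtain i where i: "qexp Q f i \<noteq> 0" "trunc_val v Q f = v (qterm f i)"
    using trunc_val_attained assms by blast
  have "trunc_val v Q (f * Q ^ j) \<le> v (qterm (f * Q ^ j) (i + j))"
    using trunc_val_le[of "f * Q ^ j" "i + j"] i by (simp add: qexp_mult_Q_power)
  also have "\<dots> = trunc_val v Q f + v (Q ^ j)"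
    using i by (simp add: qexp_mult_Q_power power_add mult.assoc[symmetric] val_mult_Q_power)
  finally show "trunc_val v Q (f * Q ^ j) \<le> trunc_val v Q f + v (Q ^ j)" .
  have "val_ge (trunc_val v Q f + v (Q ^ j)) (qterm (f * Q ^ j) i)" for i
  proof (cases "i < j \<or> qexp Q f (i - j) = 0")
    case False
    then have "Q ^ i = Q ^ (i - j) * Q ^ j"
      by (simp add: power_add[symmetric])
    then show ?thesis
      using False trunc_val_le[of f "i - j"]
      by (simp add: qexp_mult_Q_power val_ge_def mult.assoc[symmetric] val_mult_Q_power)
  qed (auto simp: qexp_mult_Q_power)
  then show "trunc_val v Q f + v (Q ^ j) \<le> trunc_val v Q (f * Q ^ j)"
    using assms by (intro trunc_val_geI) (auto simp: trunc_ge_def)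
qed

lemma qexp_small_product:
  assumes "degree F < degree Q" "degree G < degree Q"
  shows "qexp Q (F * G * Q ^ k) l =
    (if l = k then (F * G) mod Q else if l = Suc k then (F * G) div Q else 0)"
proof -
  have "F * G * Q ^ k = ((F * G) div Q * Q + (F * G) mod Q) * Q ^ k"
    by simp
  also have "\<dots> = ((F * G) mod Q) * Q ^ k + ((F * G) div Q) * Q ^ Suc k"
    by (simp only: distrib_right mult.assoc power_Suc add.commute)
  finally have eq: "F * G * Q ^ k = ((F * G) mod Q) * Q ^ k + ((F * G) div Q) * Q ^ Suc k" .
  have "degree ((F * G) mod Q) < degree Q"
    using degree_mod_less[of Q "F * G"] degree_Q by auto
  moreover have "degree ((F * G) div Q) < degree Q"
    using degree_mult_le[of F G] assms by (intro degree_div_less_if_degree_less) linarith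
  ultimately show ?thesis
    unfolding eq qexp_add qexp_mult_Q_power by (auto simp: qexp_if_degree_less)
qed

lemma qterm_small_product:
  assumes F: "F \<noteq> 0" "degree F < degree Q" and G: "G \<noteq> 0" "degree G < degree Q"
  shows "qterm (F * G * Q ^ k) k \<noteq> 0"
    and "v (qterm (F * G * Q ^ k) k) = v F + v G + v (Q ^ k)"
    and "l \<noteq> k \<Longrightarrow> val_gt (v F + v G + v (Q ^ k)) (qterm (F * G * Q ^ k) l)"
proof -
  note qexp = qexp_small_product[OF F(2) G(2)]
  show "qterm (F * G * Q ^ k) k \<noteq> 0" "v (qterm (F * G * Q ^ k) k) = v F + v G + v (Q ^ k)"
    unfolding qexp using val_mod_mult[OF F G] val_mult F G by (simp_all add: val_mult_Q_power)
  assume "l \<noteq> k"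
  show "val_gt (v F + v G + v (Q ^ k)) (qterm (F * G * Q ^ k) l)"
  proof (cases "l = Suc k \<and> (F * G) div Q \<noteq> 0")
    case True
    have "v ((F * G) div Q * Q ^ Suc k) = v ((F * G) div Q * Q) + v (Q ^ k)"
      using True val_mult_Q_power[of "(F * G) div Q * Q" k] by (simp add: mult.assoc)
    moreover have "v (F * G) < v ((F * G) div Q * Q)"
      using val_less_div_mult[of "F * G"] True F G degree_mult_le[of F G]
        eps_less_mult eps_less_if_degree_less by auto
    ultimately show ?thesis
      unfolding qexp using True val_mult[OF F(1) G(1)] by (simp add: val_gt_def)
  qed (use \<open>l \<noteq> k\<close> in \<open>auto simp: qexp\<close>)
qed

lemma trunc_ge_small_product:
  assumes "F \<noteq> 0" "degree F < degree Q" "G \<noteq> 0" "degree G < degree Q"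
  shows "trunc_ge (v F + v G + v (Q ^ k)) (F * G * Q ^ k)"
  unfolding trunc_ge_def
  using qterm_small_product[OF assms] by (metis val_ge_def val_gt_imp_ge order_refl)

lemma trunc_val_attained_least:
  assumes "f \<noteq> 0"
  obtains i where "qexp Q f i \<noteq> 0" "trunc_val v Q f = v (qterm f i)"
    and "\<And>i'. i' < i \<Longrightarrow> qexp Q f i' \<noteq> 0 \<Longrightarrow> trunc_val v Q f < v (qterm f i')"
proof -
  define i where "i = (LEAST i. qexp Q f i \<noteq> 0 \<and> trunc_val v Q f = v (qterm f i))"
  have "qexp Q f i \<noteq> 0 \<and> trunc_val v Q f = v (qterm f i)"
    unfolding i_def using trunc_val_attained[OF assms] by (rule LeastI_ex)
  moreover have "trunc_val v Q f < v (qterm f i')" if "i' < i" "qexp Q f i' \<noteq> 0" for i'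
    using not_less_Least[OF that(1)[unfolded i_def]] trunc_val_le[OF that(2)] that(2)
    by (auto simp: order.order_iff_strict)
  ultimately show ?thesis
    using that by blast
qed

lemma mult_Q_expansion:
  "f * g = (\<Sum>(i, j)\<in>{..degree f} \<times> {..degree g}. qexp Q f i * qexp Q g j * Q ^ (i + j))"
proof -
  have "f * g = (\<Sum>i\<le>degree f. qterm f i) * (\<Sum>j\<le>degree g. qterm g j)"
    using Q_expansion[of f] Q_expansion[of g] by simp
  also have "\<dots> = (\<Sum>(i, j)\<in>{..degree f} \<times> {..degree g}. qterm f i * qterm g j)"
    by (simp add: sum_product sum.cartesian_product)
  finally show ?thesis
    by (simp add: power_add mult_ac)
qed

lemma val_qterm_product:
  "qexp Q f i \<noteq> 0 \<Longrightarrow> qexp Q g j \<noteq> 0 \<Longrightarrow>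
    v (qexp Q f i) + v (qexp Q g j) + v (Q ^ (i + j)) = v (qterm f i) + v (qterm g j)"
  by (simp add: val_mult power_add algebra_simps)

lemma trunc_val_mult_ge:
  assumes "f \<noteq> 0" "g \<noteq> 0"
  shows "trunc_val v Q f + trunc_val v Q g \<le> trunc_val v Q (f * g)"
proof -
  have "trunc_ge (trunc_val v Q f + trunc_val v Q g) (qexp Q f i * qexp Q g j * Q ^ (i + j))" for i j
  proof (cases "qexp Q f i = 0 \<or> qexp Q g j = 0")
    case False
    then show ?thesis
      using trunc_ge_small_product[of "qexp Q f i" "qexp Q g j" "i + j"] degree_qexp_less
        val_qterm_product[of f i g j] trunc_val_le[of f i] trunc_val_le[of g j]
      by (auto intro: trunc_ge_mono add_mono)
  qed auto
  then have "trunc_ge (trunc_val v Q f + trunc_val v Q g) (f * g)"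
    by (subst mult_Q_expansion) (auto intro: trunc_ge_sum)
  then show ?thesis
    using assms by (simp add: trunc_val_geI)
qed

lemma val_gt_qterm_product:
  assumes "qexp Q f i \<noteq> 0" "qexp Q g j \<noteq> 0"
    and "\<gamma> \<le> v (qterm f i) + v (qterm g j)"
    and "k = i + j \<Longrightarrow> \<gamma> < v (qterm f i) + v (qterm g j)"
  shows "val_gt \<gamma> (qterm (qexp Q f i * qexp Q g j * Q ^ (i + j)) k)"
proof -
  have small: "degree (qexp Q f i) < degree Q" "degree (qexp Q g j) < degree Q"
    using assms(1,2) degree_qexp_less by auto
  note prod = qterm_small_product[OF assms(1) small(1) assms(2) small(2)]
  show ?thesis
  proof (cases "k = i + j")
    case True
    then show ?thesis
      using prod(2) assms(4) val_qterm_product[OF assms(1,2)] by (simp add: val_gt_def)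
  next
    case False
    then show ?thesis
      using prod(3)[of k "i + j"] assms(3) val_qterm_product[OF assms(1,2)] by (auto intro: val_gt_mono)
  qed
qed

text \<open>For the upper bound, look at the coefficient of \<open>Q^(i0 + j0)\<close> in \<open>f g\<close>, where \<open>i0\<close> and
  \<open>j0\<close> are the least indices at which \<open>\<nu>_Q f\<close> and \<open>\<nu>_Q g\<close> are attained: only the product
  of these two terms contributes to it with minimal value.\<close>

lemma trunc_val_mult:
  assumes f: "f \<noteq> 0" and g: "g \<noteq> 0"
  shows "trunc_val v Q (f * g) = trunc_val v Q f + trunc_val v Q g"
proof (rule antisym[OF _ trunc_val_mult_ge[OF assms]])
  define \<gamma> where "\<gamma> = trunc_val v Q f + trunc_val v Q g"
  define T where "T = (\<lambda>(i, j). qexp Q f i * qexp Q g j * Q ^ (i + j))"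
  define A where "A = {..degree f} \<times> {..degree g}"
  obtain i0 where i0: "qexp Q f i0 \<noteq> 0" "trunc_val v Q f = v (qterm f i0)"
    and i0_least: "\<And>i. i < i0 \<Longrightarrow> qexp Q f i \<noteq> 0 \<Longrightarrow> trunc_val v Q f < v (qterm f i)"
    using trunc_val_attained_least[OF f] by blast
  obtain j0 where j0: "qexp Q g j0 \<noteq> 0" "trunc_val v Q g = v (qterm g j0)"
    and j0_least: "\<And>j. j < j0 \<Longrightarrow> qexp Q g j \<noteq> 0 \<Longrightarrow> trunc_val v Q g < v (qterm g j)"
    using trunc_val_attained_least[OF g] by blast
  define k where "k = i0 + j0"
  have "(i0, j0) \<in> A"
    using i0 j0 qexp_eq_0_if_degree_less unfolding A_def by (meson atMost_iff mem_Sigma_iff not_le)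
  moreover have "f * g = sum T A"
    unfolding T_def A_def by (rule mult_Q_expansion)
  then have "qterm (f * g) k = (\<Sum>p\<in>A. qterm (T p) k)"
    by (simp add: qexp_sum sum_distrib_right)
  ultimately have "qterm (f * g) k = qterm (T (i0, j0)) k + (\<Sum>p\<in>A - {(i0, j0)}. qterm (T p) k)"
    using sum.remove[of A "(i0, j0)" "\<lambda>p. qterm (T p) k"] by (simp add: A_def)
  moreover have "qterm (T (i0, j0)) k \<noteq> 0" "v (qterm (T (i0, j0)) k) = \<gamma>"
    using qterm_small_product(1,2)[of "qexp Q f i0" "qexp Q g j0" k] i0 j0
      degree_qexp_less[of f i0] degree_qexp_less[of g j0] val_qterm_product[of f i0 g j0] unfolding T_def k_def \<gamma>_def by simp_all
  moreover have "val_gt \<gamma> (\<Sum>p\<in>A - {(i0, j0)}. qterm (T p) k)"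
  proof (rule val_gt_sum)
    fix p
    assume "p \<in> A - {(i0, j0)}"
    moreover obtain i j where p: "p = (i, j)"
      by fastforce
    ultimately have ij: "(i, j) \<noteq> (i0, j0)"
      by simp
    have "val_gt \<gamma> (qterm (T (i, j)) k)"
    proof (cases "qexp Q f i = 0 \<or> qexp Q g j = 0")
      case False
      have "k = i + j \<Longrightarrow> i < i0 \<or> j < j0"
        using ij unfolding k_def by auto
      then show ?thesis
        unfolding T_def prod.case \<gamma>_def using False i0_least j0_least trunc_val_le[of f i] trunc_val_le[of g j]
        by (intro val_gt_qterm_product) (auto intro: add_mono add_less_le_mono add_le_less_mono)
    qed (auto simp: T_def)
    then show "val_gt \<gamma> (qterm (T p) k)"
      unfolding p .
  qed
  ultimately have "qterm (f * g) k \<noteq> 0" "v (qterm (f * g) k) = \<gamma>"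
    using val_add_dominant[of "qterm (T (i0, j0)) k"] by simp_all
  then show "trunc_val v Q (f * g) \<le> \<gamma>"
    using trunc_val_le[of "f * g" k] by auto
qed

end

section \<open>The valuation \<open>\<nu>_Q\<close> on \<open>K(x)\<close> and its residue field\<close>

lemma list_lift:
  assumes "\<And>y. y \<in> set ys \<Longrightarrow> \<exists>x. P x \<and> y = f x"
  obtains xs where "ys = map f xs" "\<And>x. x \<in> set xs \<Longrightarrow> P x"
  using assms
proof (induction ys arbitrary: thesis)
  case (Cons y ys)
  obtain x where "P x" "y = f x"
    using Cons.prems(2) by auto
  moreover obtain xs where "ys = map f xs" "\<And>x. x \<in> set xs \<Longrightarrow> P x"
    using Cons.IH Cons.prems(2) by (metis list.set_intros(2))
  ultimately show ?case
    using Cons.prems(1)[of "x # xs"] by auto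
qed simp

lemma Fract_add_same_denom: "d \<noteq> 0 \<Longrightarrow> Fract a d + Fract b d = Fract (a + b) (d::'a::idom)"
  by (metis add_fract distrib_right mult_fract_cancel mult.commute)

lemma Fract_sum_same_denom: "d \<noteq> 0 \<Longrightarrow> (\<Sum>k\<in>A. Fract (g k) d) = Fract (\<Sum>k\<in>A. g k) (d::'a::idom)"
proof (induction A rule: infinite_finite_induct)
  case (insert x F)
  then show ?case
    using Fract_add_same_denom[of d "g x" "sum g F"] by simp
qed (simp_all add: fract_collapse)

lemma Fract_eq_0_iff: "b \<noteq> 0 \<Longrightarrow> Fract a b = 0 \<longleftrightarrow> a = (0::'a::idom)"
  by (simp add: Zero_fract_def eq_fract)

lemma Fract_power: "Fract a b ^ k = Fract (a ^ k) (b ^ k)"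
  by (induction k) (simp_all add: fract_collapse)

context key_poly
begin

lemma trunc_val_Q_power [simp]: "trunc_val v Q (Q ^ j) = v (Q ^ j)"
  using trunc_val_mult_Q_power[of 1 j] trunc_val_eq_val[of 1] degree_Q by simp

lemma trunc_val_frac_Fract:
  assumes "a \<noteq> 0" "b \<noteq> 0"
  shows "trunc_val_frac v Q (Fract a b) = trunc_val v Q a - trunc_val v Q b"
  unfolding trunc_val_frac_def
proof (rule the_equality)
  fix w
  assume "\<exists>f g. f \<noteq> 0 \<and> g \<noteq> 0 \<and> Fract a b = Fract f g \<and> w = trunc_val v Q f - trunc_val v Q g"
  then obtain f g where fg: "f \<noteq> 0" "g \<noteq> 0" "a * g = f * b" "w = trunc_val v Q f - trunc_val v Q g"
    using assms by (auto simp: eq_fract)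
  then have "trunc_val v Q a + trunc_val v Q g = trunc_val v Q f + trunc_val v Q b"
    using trunc_val_mult assms by metis
  then show "w = trunc_val v Q a - trunc_val v Q b"
    using fg(4) by (metis add_diff_cancel_right add.commute)
qed (use assms in blast)

lemma trunc_val_frac_mult:
  "z \<noteq> 0 \<Longrightarrow> w \<noteq> 0 \<Longrightarrow> trunc_val_frac v Q (z * w) = trunc_val_frac v Q z + trunc_val_frac v Q w"
  by (cases z rule: Fract_cases_nonzero; cases w rule: Fract_cases_nonzero)
    (simp_all add: trunc_val_frac_Fract trunc_val_mult)

lemma trunc_val_frac_one [simp]: "trunc_val_frac v Q 1 = 0"
  using trunc_val_frac_Fract[of 1 1] by (simp add: One_fract_def)

lemma trunc_val_frac_uminus [simp]: "trunc_val_frac v Q (- z) = trunc_val_frac v Q z"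
  by (cases z rule: Fract_cases_nonzero) (simp_all add: trunc_val_frac_Fract trunc_val_uminus)

lemma trunc_val_frac_inverse: "z \<noteq> 0 \<Longrightarrow> trunc_val_frac v Q (inverse z) = - trunc_val_frac v Q z"
  using trunc_val_frac_mult[of z "inverse z"] by (simp add: eq_neg_iff_add_eq_0 add.commute)

lemma trunc_val_frac_const: "c \<noteq> 0 \<Longrightarrow> trunc_val_frac v Q (Fract [:c:] 1) = v [:c:]"
  using degree_Q by (simp add: trunc_val_frac_Fract trunc_val_eq_val)

lemma trunc_val_frac_add:
  assumes "z \<noteq> 0" "w \<noteq> 0" "z + w \<noteq> 0"
  shows "min (trunc_val_frac v Q z) (trunc_val_frac v Q w) \<le> trunc_val_frac v Q (z + w)"
proof -
  obtain a b c d where abcd: "a \<noteq> 0" "b \<noteq> 0" "z = Fract a b" "c \<noteq> 0" "d \<noteq> 0" "w = Fract c d"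
    using assms(1,2) by (metis Fract_cases_nonzero)
  then have sum: "z + w = Fract (a * d + c * b) (b * d)" "a * d + c * b \<noteq> 0"
    using assms(3) by (auto simp: fract_collapse)
  have "min (trunc_val v Q (a * d)) (trunc_val v Q (c * b)) \<le> trunc_val v Q (a * d + c * b)"
    using trunc_val_add[of "a * d" "c * b"] abcd sum by simp
  then show ?thesis
    using abcd sum by (simp add: trunc_val_frac_Fract trunc_val_mult min_def algebra_simps split: if_splits)
qed

abbreviation Rv where "Rv \<equiv> val_ring v Q"
abbreviation Mv where "Mv \<equiv> max_ideal v Q"

lemma val_ring_simps [simp]:
  "carrier Rv = {z. z = 0 \<or> 0 \<le> trunc_val_frac v Q z}"
  "mult Rv = (*)" "add Rv = (+)" "one Rv = 1" "zero Rv = 0"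
  by (simp_all add: val_ring_def)

lemma val_ring_add_closed: "z \<in> carrier Rv \<Longrightarrow> w \<in> carrier Rv \<Longrightarrow> z + w \<in> carrier Rv"
  using trunc_val_frac_add[of z w] by (fastforce simp: min_def split: if_splits)

lemma val_ring_mult_closed: "z \<in> carrier Rv \<Longrightarrow> w \<in> carrier Rv \<Longrightarrow> z * w \<in> carrier Rv"
  by (cases "z = 0 \<or> w = 0") (auto simp: trunc_val_frac_mult)

lemma val_ring_zero_closed: "0 \<in> carrier Rv"
  and val_ring_one_closed: "1 \<in> carrier Rv"
  and val_ring_uminus_closed: "z \<in> carrier Rv \<Longrightarrow> - z \<in> carrier Rv"
  by simp_all

lemma val_ring_cring: "cring Rv"
proof (rule cringI)
  show "abelian_group Rv"
    by (rule abelian_groupI) (auto simp: val_ring_add_closed add.assoc add.commute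
        simp del: val_ring_simps(1) intro: val_ring_zero_closed val_ring_uminus_closed intro!: bexI[where x = "- _"])
  show "comm_monoid Rv"
    by (rule comm_monoidI) (auto simp: val_ring_mult_closed val_ring_one_closed mult.assoc mult.commute
        simp del: val_ring_simps(1))
qed (simp add: distrib_right)

sublocale Rv: cring Rv
  by (rule val_ring_cring)

lemma val_ring_a_inv: "z \<in> carrier Rv \<Longrightarrow> \<ominus>\<^bsub>Rv\<^esub> z = - z"
  by (rule Rv.minus_equality) auto

lemma max_ideal_ideal: "ideal Mv Rv"
proof (rule idealI)
  show "subgroup Mv (add_monoid Rv)"
  proof (rule Rv.add.subgroupI)
    show "Mv \<subseteq> carrier Rv" "Mv \<noteq> {}"
      unfolding max_ideal_def by auto
    fix a b
    assume ab: "a \<in> Mv" "b \<in> Mv"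
    have "a \<in> carrier Rv"
      using ab(1) unfolding max_ideal_def by auto
    then show "\<ominus>\<^bsub>Rv\<^esub> a \<in> Mv"
      using ab(1) by (simp add: val_ring_a_inv max_ideal_def)
    show "a \<oplus>\<^bsub>Rv\<^esub> b \<in> Mv"
      using ab trunc_val_frac_add[of a b] by (fastforce simp: max_ideal_def min_def split: if_splits)
  qed
  fix a x
  assume ax: "a \<in> Mv" "x \<in> carrier Rv"
  show "x \<otimes>\<^bsub>Rv\<^esub> a \<in> Mv" "a \<otimes>\<^bsub>Rv\<^esub> x \<in> Mv"
    using ax by (cases "a = 0 \<or> x = 0", auto simp: max_ideal_def trunc_val_frac_mult add_nonneg_pos add_pos_nonneg)+
qed (rule Rv.ring_axioms)

sublocale Mv: ideal Mv Rv
  by (rule max_ideal_ideal)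

lemma residue_ring_hom: "ring_hom_ring Rv (residue_field v Q) (residue v Q)"
  unfolding residue_field_def residue_def[abs_def] by (rule Mv.rcos_ring_hom_ring)

sublocale residue: ring_hom_ring Rv "residue_field v Q" "residue v Q"
  by (rule residue_ring_hom)

lemma carrier_residue_field: "carrier (residue_field v Q) = residue v Q ` carrier Rv"
  unfolding residue_field_def residue_def FactRing_def A_RCOSETS_def RCOSETS_def
  by (auto simp: a_r_coset_def)

lemma residue_eq_zero_iff: "z \<in> carrier Rv \<Longrightarrow> residue v Q z = \<zero>\<^bsub>residue_field v Q\<^esub> \<longleftrightarrow> z \<in> Mv"
  unfolding residue_field_def residue_def FactRing_def
  using Mv.rcos_const_imp_mem Rv.a_rcos_zero[OF max_ideal_ideal] by auto

lemma residue_field_field: "field (residue_field v Q)"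
proof -
  interpret cring "residue_field v Q"
    unfolding residue_field_def by (rule Mv.quotient_is_cring[OF val_ring_cring])
  show ?thesis
  proof (rule cring_fieldI2)
    show "\<zero>\<^bsub>residue_field v Q\<^esub> \<noteq> \<one>\<^bsub>residue_field v Q\<^esub>"
      using residue_eq_zero_iff[of 1] residue.hom_one by (simp add: max_ideal_def)
    fix y
    assume "y \<in> carrier (residue_field v Q)" "y \<noteq> \<zero>\<^bsub>residue_field v Q\<^esub>"
    then obtain z where z: "z \<in> carrier Rv" "y = residue v Q z" "z \<notin> Mv"
      unfolding carrier_residue_field using residue_eq_zero_iff by auto
    then have "z \<noteq> 0" "trunc_val_frac v Q z = 0"
      unfolding max_ideal_def by auto
    then have "inverse z \<in> carrier Rv" "z * inverse z = 1"
      by (simp_all add: trunc_val_frac_inverse)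
    then show "\<exists>y'\<in>carrier (residue_field v Q). y \<otimes>\<^bsub>residue_field v Q\<^esub> y' = \<one>\<^bsub>residue_field v Q\<^esub>"
      using residue.hom_mult[OF z(1)] residue.hom_one z(2) z(1) carrier_residue_field
      by (metis image_eqI val_ring_simps(2,4))
  qed
qed

sublocale residue_field: field "residue_field v Q"
  by (rule residue_field_field)

definition integral_consts :: "'a poly fract set" where
  "integral_consts = {Fract [:c:] 1 | c. val_ge 0 [:c:]}"

lemma base_residue_field_eq: "base_residue_field v Q = residue v Q ` integral_consts"
  unfolding base_residue_field_def integral_consts_def val_ge_def by auto

lemma integral_const_in_val_ring: "val_ge 0 [:c:] \<Longrightarrow> Fract [:c:] 1 \<in> carrier Rv"
  by (cases "c = 0") (auto simp: val_ge_def trunc_val_frac_const fract_collapse)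

lemma integral_consts_subring: "subring integral_consts Rv"
proof (rule Rv.subringI)
  show "integral_consts \<subseteq> carrier Rv"
    unfolding integral_consts_def using integral_const_in_val_ring by auto
  show "\<one>\<^bsub>Rv\<^esub> \<in> integral_consts"
    unfolding integral_consts_def val_ge_def
    by (auto simp: One_fract_def one_pCons[symmetric] intro!: exI[of _ 1])
  fix a b
  assume "a \<in> integral_consts" "b \<in> integral_consts"
  then obtain c d where c: "a = Fract [:c:] 1" "val_ge 0 [:c:]" and d: "b = Fract [:d:] 1" "val_ge 0 [:d:]"
    unfolding integral_consts_def by blast
  have "\<ominus>\<^bsub>Rv\<^esub> a = Fract [:- c:] 1" "val_ge 0 [:- c:]"
    using c integral_const_in_val_ring[of c] val_uminus[of "[:c:]"] by (simp_all add: val_ring_a_inv val_ge_def)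
  then show "\<ominus>\<^bsub>Rv\<^esub> a \<in> integral_consts"
    unfolding integral_consts_def by blast
  have "val_ge 0 [:c * d:]"
  proof (cases "c = 0 \<or> d = 0")
    case False
    then have "v [:c * d:] = v [:c:] + v [:d:]"
      using val_mult[of "[:c:]" "[:d:]"] by (simp add: mult.commute)
    then show ?thesis
      using c(2) d(2) False by (simp add: val_ge_def)
  qed (auto simp: val_ge_def)
  moreover have "a \<otimes>\<^bsub>Rv\<^esub> b = Fract [:c * d:] 1"
    using c d by (simp add: mult.commute)
  ultimately show "a \<otimes>\<^bsub>Rv\<^esub> b \<in> integral_consts"
    unfolding integral_consts_def by blast
  have "a \<oplus>\<^bsub>Rv\<^esub> b = Fract [:c + d:] 1" "val_ge 0 [:c + d:]"
    using c d val_ge_add[of 0 "[:c:]" "[:d:]"] by (simp_all add: Fract_add_same_denom)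
  then show "a \<oplus>\<^bsub>Rv\<^esub> b \<in> integral_consts"
    unfolding integral_consts_def by blast
qed

lemma integral_const_unit:
  assumes "val_ge 0 [:c:]" "Fract [:c:] 1 \<notin> Mv"
  shows "c \<noteq> 0" "v [:c:] = 0"
proof -
  show "c \<noteq> 0"
    using assms(2) by (auto simp: max_ideal_def fract_collapse)
  then show "v [:c:] = 0"
    using assms by (auto simp: val_ge_def max_ideal_def trunc_val_frac_const)
qed

lemma base_residue_field_subfield: "subfield (base_residue_field v Q) (residue_field v Q)"
  unfolding base_residue_field_eq
proof (rule residue_field.subfieldI'[OF residue.img_is_subring[OF integral_consts_subring]])
  fix y
  assume "y \<in> residue v Q ` integral_consts - {\<zero>\<^bsub>residue_field v Q\<^esub>}"
  then obtain c where c: "y = residue v Q (Fract [:c:] 1)" "val_ge 0 [:c:]" "Fract [:c:] 1 \<notin> Mv"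
    unfolding integral_consts_def using integral_const_in_val_ring residue_eq_zero_iff by auto
  note unit = integral_const_unit[OF c(2,3)]
  have "v [:inverse c:] = 0"
    using val_mult[of "[:c:]" "[:inverse c:]"] unit by (simp add: one_pCons[symmetric])
  then have inv_in: "Fract [:inverse c:] 1 \<in> integral_consts"
    unfolding integral_consts_def val_ge_def by auto
  then have inv_carrier: "Fract [:inverse c:] 1 \<in> carrier Rv"
    using integral_consts_subring subringE(1) by blast
  have "y \<otimes>\<^bsub>residue_field v Q\<^esub> residue v Q (Fract [:inverse c:] 1) = \<one>\<^bsub>residue_field v Q\<^esub>"
    using residue.hom_mult[OF integral_const_in_val_ring[OF c(2)] inv_carrier] residue.hom_one
      unit(1) c(1) by (simp add: One_fract_def one_pCons[symmetric])
  then have "inv\<^bsub>residue_field v Q\<^esub> y = residue v Q (Fract [:inverse c:] 1)"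
    using residue_field.comm_inv_char c(1) integral_const_in_val_ring[OF c(2)] inv_carrier by simp
  then show "inv\<^bsub>residue_field v Q\<^esub> y \<in> residue v Q ` integral_consts"
    using inv_in by simp
qed

lemma trunc_val_one [simp]: "trunc_val v Q 1 = 0"
  using trunc_val_eq_val[of 1] degree_Q by simp

lemma trunc_val_power: "f \<noteq> 0 \<Longrightarrow> trunc_val v Q (f ^ k) = nmul k (trunc_val v Q f)"
  by (induction k) (simp_all add: trunc_val_mult)

lemma val_power_mod:
  assumes "h \<noteq> 0" "degree h < degree Q"
  shows "(h ^ k) mod Q \<noteq> 0 \<and> v ((h ^ k) mod Q) = nmul k (v h)"
proof (induction k)
  case 0
  then show ?case
    using degree_Q by (simp add: mod_poly_less)
next
  case (Suc k)
  define s where "s = (h ^ k) mod Q"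
  have s: "s \<noteq> 0" "degree s < degree Q"
    using Suc degree_mod_less[of Q "h ^ k"] unfolding s_def by auto
  have "(h ^ Suc k) mod Q = (h * s) mod Q"
    unfolding s_def by (simp add: mod_mult_right_eq)
  then show ?case
    using val_mod_mult[OF assms s] val_mult[OF assms(1) s(1)] Suc unfolding s_def by simp
qed

lemma lift_to_integral_consts:
  assumes "set p \<subseteq> base_residue_field v Q"
  obtains cs where "p = map (\<lambda>c. residue v Q (Fract [:c:] 1)) cs" "\<And>c. c \<in> set cs \<Longrightarrow> val_ge 0 [:c:]"
proof -
  have "\<And>y. y \<in> set p \<Longrightarrow> \<exists>c. val_ge 0 [:c:] \<and> y = residue v Q (Fract [:c:] 1)"
    using assms unfolding base_residue_field_eq integral_consts_def by blast
  then show ?thesis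
    using list_lift[of p "\<lambda>c. val_ge 0 [:c:]" "\<lambda>c. residue v Q (Fract [:c:] 1)"] that by blast
qed

lemma eval_val_ring: "ring.eval Rv l x = (\<Sum>k<length l. l ! (length l - Suc k) * x ^ k)"
proof (induction l)
  case (Cons a l)
  have pow: "x [^]\<^bsub>Rv\<^esub> (n::nat) = x ^ n" for n
    by (induction n) (simp_all add: mult.commute)
  have "(\<Sum>k<length l. l ! (length l - Suc k) * x ^ k)
      = (\<Sum>k<length l. (a # l) ! (length (a # l) - Suc k) * x ^ k)"
    by (intro sum.cong refl) (simp add: Suc_diff_Suc)
  then show ?case
    using Cons.IH by (simp add: pow add.commute)
qed simp

end

locale key_ratio = key_poly v Q for v :: "'a::field poly \<Rightarrow> 'g::linordered_ab_group_add" and Q +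
  fixes h :: "'a poly" and e :: nat
  assumes e_pos: "e \<ge> 1"
    and h_nonzero: "h \<noteq> 0"
    and degree_h: "degree h < degree Q"
    and val_Q_power_e: "v (Q ^ e) = v h"
begin

definition ratio :: "'a poly fract" where
  "ratio = Fract (Q ^ e) h"

lemma trunc_val_frac_ratio: "trunc_val_frac v Q ratio = 0"
  unfolding ratio_def using h_nonzero degree_h val_Q_power_e
  by (simp add: trunc_val_frac_Fract trunc_val_eq_val)

lemma val_Q_power_e_mult: "v (Q ^ (e * k)) = nmul k (v h)"
  using val_power[of "Q ^ e" k] val_Q_power_e by (simp add: power_mult)

text \<open>Clearing denominators in \<open>\<Sum>_{k \<le> m} d_k r^k\<close> with \<open>r = Q^e / h\<close> gives the numerator
  \<open>\<Sum>_{k \<le> m} d_k h^(m - k) Q^(e k)\<close> over \<open>h^m\<close>.\<close>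

definition numer_term :: "(nat \<Rightarrow> 'a) \<Rightarrow> nat \<Rightarrow> nat \<Rightarrow> 'a poly" where
  "numer_term d m k = [:d k:] * h ^ (m - k) * Q ^ (e * k)"

lemma const_mult_ratio_power:
  assumes "k \<le> m"
  shows "Fract [:c:] 1 * ratio ^ k = Fract ([:c:] * h ^ (m - k) * Q ^ (e * k)) (h ^ m)"
proof -
  have "Fract [:c:] 1 * ratio ^ k = Fract ([:c:] * Q ^ (e * k)) (h ^ k)"
    unfolding ratio_def Fract_power by (simp add: power_mult)
  also have "\<dots> = Fract (h ^ (m - k) * ([:c:] * Q ^ (e * k))) (h ^ (m - k) * h ^ k)"
    using h_nonzero by (subst mult_fract_cancel) simp_all
  also have "h ^ (m - k) * h ^ k = h ^ m"
    using assms by (simp add: power_add[symmetric])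
  finally show ?thesis
    by (simp add: ac_simps)
qed

lemma trunc_val_numer_term:
  assumes "d k \<noteq> 0" "k \<le> m"
  shows "trunc_val v Q (numer_term d m k) = v [:d k:] + nmul m (v h)"
proof -
  have "trunc_val v Q (numer_term d m k)
      = v [:d k:] + nmul (m - k) (v h) + nmul k (v h)"
    unfolding numer_term_def mult.assoc using assms(1) h_nonzero degree_h degree_Q
    by (simp add: trunc_val_mult trunc_val_mult_Q_power trunc_val_power trunc_val_eq_val
        val_Q_power_e_mult add.assoc del: mult_pCons_left)
  also have "\<dots> = v [:d k:] + nmul m (v h)"
    using assms(2) nmul_add_left[of "m - k" k "v h"] by (simp add: add.assoc)
  finally show ?thesis .
qed

lemma qterm_numer_term_unit:
  assumes "d i \<noteq> 0" "v [:d i:] = 0" "i \<le> m"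
  shows "qterm (numer_term d m i) (e * i) \<noteq> 0"
    and "v (qterm (numer_term d m i) (e * i)) = nmul m (v h)"
proof -
  have qexp: "qexp Q (numer_term d m i) (e * i) = [:d i:] * ((h ^ (m - i)) mod Q)"
    unfolding numer_term_def qexp_mult_Q_power by (simp add: qexp_def mod_smult_left)
  note power_mod = val_power_mod[OF h_nonzero degree_h, of "m - i"]
  show "qterm (numer_term d m i) (e * i) \<noteq> 0"
    unfolding qexp using assms(1) power_mod by simp
  have "v (qterm (numer_term d m i) (e * i)) = nmul (m - i) (v h) + nmul i (v h)"
    unfolding qexp using assms power_mod val_Q_power_e_mult by (simp add: val_mult del: mult_pCons_left)
  also have "\<dots> = nmul m (v h)"
    using assms(3) nmul_add_left[of "m - i" i "v h"] by simp
  finally show "v (qterm (numer_term d m i) (e * i)) = nmul m (v h)" .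
qed

text \<open>Let \<open>i\<close> be the least index with \<open>d_i\<close> a unit. The coefficient of \<open>Q^(e i)\<close> in the
  numerator has value exactly \<open>m \<nu>(h)\<close>: the terms with \<open>k > i\<close> do not reach \<open>Q^(e i)\<close>, and
  those with \<open>k < i\<close> have larger value since \<open>d_k\<close> is then not a unit.\<close>

lemma trunc_val_numer_le:
  assumes d: "\<And>k. k \<le> m \<Longrightarrow> val_ge 0 [:d k:]" and dm: "d m \<noteq> 0" "v [:d m:] = 0"
  shows "(\<Sum>k\<le>m. numer_term d m k) \<noteq> 0"
    and "trunc_val v Q (\<Sum>k\<le>m. numer_term d m k) \<le> nmul m (v h)"
proof -
  define P where "P k \<longleftrightarrow> k \<le> m \<and> d k \<noteq> 0 \<and> v [:d k:] = 0" for k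
  define i where "i = (LEAST k. P k)"
  have "P i"
    unfolding i_def using dm by (intro LeastI[of P m]) (simp add: P_def)
  then have i: "i \<le> m" "d i \<noteq> 0" "v [:d i:] = 0"
    unfolding P_def by auto
  have "val_gt (nmul m (v h)) (qterm (numer_term d m k) (e * i))" if k: "k \<le> m" "k \<noteq> i" for k
  proof (cases "i < k")
    case True
    then show ?thesis
      using e_pos unfolding numer_term_def qexp_mult_Q_power by simp
  next
    case False
    then have "k < i"
      using k by simp
    show ?thesis
    proof (cases "d k = 0 \<or> qexp Q (numer_term d m k) (e * i) = 0")
      case False
      then have "0 < v [:d k:]"
        using not_less_Least[OF \<open>k < i\<close>[unfolded i_def]] d[OF k(1)] k(1)
        unfolding P_def val_ge_def by auto
      then have "nmul m (v h) < trunc_val v Q (numer_term d m k)"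
        using trunc_val_numer_term[OF _ k(1)] False by simp
      then show ?thesis
        using trunc_val_le False unfolding val_gt_def by (blast intro: less_le_trans)
    qed (auto simp: numer_term_def)
  qed
  then have "val_gt (nmul m (v h)) (\<Sum>k\<in>{..m} - {i}. qterm (numer_term d m k) (e * i))"
    by (intro val_gt_sum) auto
  moreover have "qterm (\<Sum>k\<le>m. numer_term d m k) (e * i)
      = qterm (numer_term d m i) (e * i) + (\<Sum>k\<in>{..m} - {i}. qterm (numer_term d m k) (e * i))"
    unfolding qexp_sum sum_distrib_right using sum.remove[of "{..m}" i] i(1) by simp
  ultimately have "qterm (\<Sum>k\<le>m. numer_term d m k) (e * i) \<noteq> 0"
    "v (qterm (\<Sum>k\<le>m. numer_term d m k) (e * i)) = nmul m (v h)"
    using val_add_dominant qterm_numer_term_unit[of d i m, OF i(2,3,1)] by simp_all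
  then show "(\<Sum>k\<le>m. numer_term d m k) \<noteq> 0"
    and "trunc_val v Q (\<Sum>k\<le>m. numer_term d m k) \<le> nmul m (v h)"
    using trunc_val_le[of "\<Sum>k\<le>m. numer_term d m k" "e * i"] by auto
qed

lemma ratio_poly_not_in_max_ideal:
  assumes "\<And>k. k \<le> m \<Longrightarrow> val_ge 0 [:d k:]" "d m \<noteq> 0" "v [:d m:] = 0"
  shows "(\<Sum>k\<le>m. Fract [:d k:] 1 * ratio ^ k) \<notin> Mv"
proof -
  define F where "F = (\<Sum>k\<le>m. numer_term d m k)"
  have "(\<Sum>k\<le>m. Fract [:d k:] 1 * ratio ^ k) = (\<Sum>k\<le>m. Fract (numer_term d m k) (h ^ m))"
    unfolding numer_term_def by (intro sum.cong refl) (simp add: const_mult_ratio_power)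
  also have "\<dots> = Fract F (h ^ m)"
    unfolding F_def using h_nonzero by (simp add: Fract_sum_same_denom)
  finally have eq: "(\<Sum>k\<le>m. Fract [:d k:] 1 * ratio ^ k) = Fract F (h ^ m)" .
  have "F \<noteq> 0" "trunc_val v Q F \<le> nmul m (v h)"
    using trunc_val_numer_le[of m d, OF assms] unfolding F_def by simp_all
  moreover have "trunc_val v Q (h ^ m) = nmul m (v h)"
    using h_nonzero degree_h by (simp add: trunc_val_power trunc_val_eq_val)
  ultimately show ?thesis
    unfolding eq max_ideal_def using h_nonzero
    by (auto simp: trunc_val_frac_Fract Fract_eq_0_iff)
qed

end

section \<open>Transcendence of the residue of \<open>Q^e / h\<close>\<close>

lemma (in field) transcendental_over_algebraic_subfield:
  assumes K: "subfield K R" and L: "subfield L R"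
    and alg: "\<And>y. y \<in> L \<Longrightarrow> (algebraic over K) y"
    and x: "x \<in> carrier R" "(transcendental over K) x"
  shows "(transcendental over L) x"
proof (rule ccontr)
  assume "\<not> (transcendental over L) x"
  then obtain p where p: "p \<in> carrier (L[X])" "p \<noteq> []" "eval p x = \<zero>"
    using algebraicE[OF subfieldE(1)[OF L] x(1)] unfolding over_def by blast
  then have p_L: "set p \<subseteq> L"
    unfolding univ_poly_carrier[symmetric] polynomial_def by auto
  then have p_carrier: "set p \<subseteq> carrier R"
    using subfieldE(3)[OF L] by blast
  have alg_p: "\<And>y. y \<in> set p \<Longrightarrow> (algebraic over K) y"
    using alg p_L by blast
  define F where "F = finite_extension K p"
  have F: "subfield F R" "finite_dimension K F"
    unfolding F_def using finite_extension_is_subfield[OF K p_carrier alg_p]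
      finite_extension_finite_dimension(1)[OF K p_carrier alg_p] by auto
  have "p \<in> carrier (F[X])"
    using p finite_extension_mem[OF subfieldE(1)[OF K] p_carrier]
    unfolding F_def univ_poly_carrier[symmetric] polynomial_def by auto
  then have "(algebraic over F) x"
    using p by (intro algebraicI) auto
  then have "finite_dimension F (simple_extension F x)"
    using finite_dimension_simple_extension[OF F(1) x(1)] by simp
  then have "finite_dimension K (simple_extension F x)"
    using telescopic_base_dim(1)[OF K F(1) F(2)] by blast
  then have "(algebraic over K) x"
    using finite_dimension_imp_algebraic[OF K simple_extension_is_subring[OF subfieldE(1)[OF F(1)] x(1)]]
      simple_extension_mem[OF subfieldE(1)[OF F(1)] x(1)] by blast
  then show False
    using x(2) unfolding over_def by simp
qed

context key_ratio
begin

lemma ratio_in_val_ring: "ratio \<in> carrier Rv"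
  using trunc_val_frac_ratio by simp

lemma residue_ratio_in_carrier: "residue v Q ratio \<in> carrier (residue_field v Q)"
  using residue.hom_closed[OF ratio_in_val_ring] .

lemma eval_residue_ratio_nonzero:
  assumes p: "p \<in> carrier ((base_residue_field v Q)[X]\<^bsub>residue_field v Q\<^esub>)" "p \<noteq> []"
  shows "ring.eval (residue_field v Q) p (residue v Q ratio) \<noteq> \<zero>\<^bsub>residue_field v Q\<^esub>"
proof -
  have p_set: "set p \<subseteq> base_residue_field v Q" and p_hd: "hd p \<noteq> \<zero>\<^bsub>residue_field v Q\<^esub>"
    using p unfolding univ_poly_carrier[symmetric] polynomial_def by auto
  obtain cs where cs: "p = map (\<lambda>c. residue v Q (Fract [:c:] 1)) cs"
    "\<And>c. c \<in> set cs \<Longrightarrow> val_ge 0 [:c:]"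
    using lift_to_integral_consts[OF p_set] by blast
  define m where "m = length cs - 1"
  define d where "d k = cs ! (m - k)" for k
  have len: "length cs = Suc m"
    using p(2) cs(1) unfolding m_def by (cases cs) auto
  have d: "\<And>k. k \<le> m \<Longrightarrow> val_ge 0 [:d k:]"
    unfolding d_def using cs(2) len by (simp add: nth_mem)
  have lifted: "set (map (\<lambda>c. Fract [:c:] 1) cs) \<subseteq> carrier Rv"
    using cs(2) integral_const_in_val_ring by auto
  have "residue v Q (Fract [:d m:] 1) \<noteq> \<zero>\<^bsub>residue_field v Q\<^esub>"
    using p_hd len unfolding cs(1) d_def by (cases cs) auto
  then have "d m \<noteq> 0" "v [:d m:] = 0"
    using integral_const_unit[OF d[OF order_refl]] residue_eq_zero_iff
      integral_const_in_val_ring[OF d[OF order_refl]] by auto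
  then have "(\<Sum>k\<le>m. Fract [:d k:] 1 * ratio ^ k) \<notin> Mv"
    using ratio_poly_not_in_max_ideal d by blast
  moreover have "ring.eval Rv (map (\<lambda>c. Fract [:c:] 1) cs) ratio = (\<Sum>k\<le>m. Fract [:d k:] 1 * ratio ^ k)"
    unfolding eval_val_ring d_def using len by (simp add: lessThan_Suc_atMost[symmetric])
  moreover have "residue v Q (ring.eval Rv (map (\<lambda>c. Fract [:c:] 1) cs) ratio)
      = ring.eval (residue_field v Q) p (residue v Q ratio)"
    unfolding cs(1) using residue.eval_hom'[OF ratio_in_val_ring lifted] by (simp add: comp_def)
  ultimately show ?thesis
    using residue_eq_zero_iff Rv.eval_in_carrier[OF lifted ratio_in_val_ring] by metis
qed

lemma residue_ratio_transcendental:
  "ring.transcendental (residue_field v Q) (base_residue_field v Q) (residue v Q ratio)"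
proof (rule ccontr)
  assume "\<not> ?thesis"
  then show False
    using residue_field.algebraicE[OF subfieldE(1)[OF base_residue_field_subfield]
        residue_ratio_in_carrier] eval_residue_ratio_nonzero
    unfolding over_def by metis
qed

end

theorem proposition3p4:
  fixes v :: "'a::field poly \<Rightarrow> 'g::linordered_ab_group_add"
    and Q h :: "'a poly" and e :: nat
  assumes "krull_valuation v"
    and "key_polynomial v Q"
    and "e \<ge> 1"
    and "h \<noteq> 0"
    and "Polynomial.degree h < Polynomial.degree Q"
    and "v (Q ^ e) = v h"
  shows "trunc_val_frac v Q (Fract (Q ^ e) h) = 0
    \<and> ring.transcendental (residue_field v Q) (base_residue_field v Q) (residue v Q (Fract (Q ^ e) h))
    \<and> (\<forall>L. subfield L (residue_field v Q) \<and> base_residue_field v Q \<subseteq> L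
             \<and> (\<forall>y\<in>L. \<not> ring.transcendental (residue_field v Q) (base_residue_field v Q) y)
           \<longrightarrow> ring.transcendental (residue_field v Q) L (residue v Q (Fract (Q ^ e) h)))"
proof -
  interpret key_ratio v Q h e
    by unfold_locales (use assms in auto)
  have r: "Fract (Q ^ e) h = ratio"
    by (simp add: ratio_def)
  show ?thesis
    unfolding r using trunc_val_frac_ratio residue_ratio_transcendental residue_ratio_in_carrier
      residue_field.transcendental_over_algebraic_subfield[OF base_residue_field_subfield]
    unfolding over_def by blast
qed

end
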